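(* Let $X\in\mathbb{R}^{n\times d}$, $y\in\mathbb{R}^n$, and let $g:\mathbb{R}^d\to(-\infty,\infty]$ be a proper lower semicontinuous convex function with $g(k\beta)=kg(\beta)$ for all $k\ge0$, $\beta\in\mathbb{R}^d$, and with some $\beta\in\mathrm{relint}(\mathrm{dom}(g))$. For $\lambda>0$ consider the problem $\min_\beta \frac12\|\frac1\lambda y-X\beta\|_2^2+g(\beta)$, assumed to attain its minimum, with Fenchel–Rockafellar dual $\max_\theta -\frac12\|\theta\|_2^2+\frac1\lambda y^\top\theta-g^\star(X^\top\theta)$; let $\hat\beta^{(\lambda)}$ and $\hat\theta^{(\lambda)}$ be primal and dual optimal points, respectively. Fix $\lambda_0>0$ and define \[ \mathcal{R}^{\mathrm{Sasvi}}(\lambda_0)=\Big\{\theta\ \Big|\ 0\ge(y-\theta)^\top(\hat\theta^{(\lambda_0)}-\theta)\ \land\ 0\ge\big(\tfrac1{\lambda_0}y-\hat\theta^{(\lambda_0)}\big)^\top(\theta-\hat\theta^{(\lambda_0)})\Big\}, \] \[ \mathcal{R}^{\mathrm{DS}}(\hat\beta^{(\lambda_0)},\hat\theta^{(\lambda_0)})=\Big\{\theta\ \Big|\ \Big\|\theta-\tfrac12(\hat\theta^{(\lambda_0)}+y)\Big\|_2^2\le\tfrac14\|\hat\theta^{(\lambda_0)}-y\|_2^2\ \land\ 0\le g(\hat\beta^{(\lambda_0)})-\theta^\top X\hat\beta^{(\lambda_0)}\Big\}. \] Then $\mathcal{R}^{\mathrm{Sasvi}}(\lambda_0)=\mathc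al{R}^{\mathrm{DS}}(\hat\beta^{(\lambda_0)},\hat\theta^{(\lambda_0)})$.
   Context: $g^\star(v)=\sup_\beta v^\top\beta-g(\beta)$ is the Fenchel conjugate; $\mathrm{dom}(g)=\{\beta:|g(\beta)|<\infty\}$; $\mathrm{relint}$ is relative interior. Both sets are regions intended to contain the dual optimal point $\hat\theta^{(1)}$ of the $\lambda=1$ problem. *)

theory Defs
  imports "HOL-Analysis.Analysis"
begin

definition edom :: "('a \<Rightarrow> ereal) \<Rightarrow> 'a set" where
  "edom g = {x. \<bar>g x\<bar> < \<infinity>}"

definition proper_fun :: "('a \<Rightarrow> ereal) \<Rightarrow> bool" where
  "proper_fun g \<longleftrightarrow> (\<forall>x. g x \<noteq> -\<infinity>) \<and> (\<exists>x. g x < \<infinity>)"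

definition econvex :: "('a::real_vector \<Rightarrow> ereal) \<Rightarrow> bool" where
  "econvex g \<longleftrightarrow> convex {(x, r::real). g x \<le> ereal r}"

definition elsc :: "('a::topological_space \<Rightarrow> ereal) \<Rightarrow> bool" where
  "elsc g \<longleftrightarrow> (\<forall>c::ereal. closed {x. g x \<le> c})"

definition fenchel_conj :: "('a::real_inner \<Rightarrow> ereal) \<Rightarrow> 'a \<Rightarrow> ereal" where
  "fenchel_conj g v = (SUP b. ereal (v \<bullet> b) - g b)"

definition primal_obj ::
  "real^'d^'n \<Rightarrow> real^'n \<Rightarrow> (real^'d \<Rightarrow> ereal) \<Rightarrow> real \<Rightarrow> real^'d \<Rightarrow> ereal" where
  "primal_obj X y g lam b = ereal (1/2 * (norm ((1/lam) *\<^sub>R y - X *v b))\<^sup>2) + g b"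

definition dual_obj ::
  "real^'d^'n \<Rightarrow> real^'n \<Rightarrow> (real^'d \<Rightarrow> ereal) \<Rightarrow> real \<Rightarrow> real^'n \<Rightarrow> ereal" where
  "dual_obj X y g lam \<theta> =
     ereal (- 1/2 * (norm \<theta>)\<^sup>2 + (1/lam) * (y \<bullet> \<theta>)) - fenchel_conj g (transpose X *v \<theta>)"

definition R_Sasvi :: "real^'n \<Rightarrow> real \<Rightarrow> real^'n \<Rightarrow> (real^'n) set" where
  "R_Sasvi y lam0 \<theta>0 =
     {\<theta>. 0 \<ge> (y - \<theta>) \<bullet> (\<theta>0 - \<theta>) \<and> 0 \<ge> ((1/lam0) *\<^sub>R y - \<theta>0) \<bullet> (\<theta> - \<theta>0)}"

definition R_DS ::
  "real^'d^'n \<Rightarrow> real^'n \<Rightarrow> (real^'d \<Rightarrow> ereal) \<Rightarrow> real^'d \<Rightarrow> real^'n \<Rightarrow> (real^'n) set" where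
  "R_DS X y g b0 \<theta>0 =
     {\<theta>. (norm (\<theta> - (1/2) *\<^sub>R (\<theta>0 + y)))\<^sup>2 \<le> 1/4 * (norm (\<theta>0 - y))\<^sup>2
          \<and> 0 \<le> g b0 - ereal (\<theta> \<bullet> (X *v b0))}"

end

theory Submission
  imports Defs
begin

text \<open>
  Optimality of \<open>\<beta>0\<close> gives the first-order condition that \<open>X\<^sup>T r\<close> is a subgradient
  of \<open>g\<close> at \<open>\<beta>0\<close>, where \<open>r = y/\<lambda>0 - X \<beta>0\<close> is the residual. By the Fenchel--Young
  equality the dual objective at \<open>r\<close> then equals the primal optimum, while for every
  \<open>\<theta>\<close> the dual objective lies below the primal one by at least \<open>\<parallel>\<theta> - r\<parallel>\<^sup>2/2\<close>; hence
  the dual optimum is \<open>\<theta>0 = r\<close>, i.e. \<open>y/\<lambda>0 - \<theta>0 = X \<beta>0\<close>. Positive homogeneity turns the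
  subgradient inequality into \<open>g \<beta>0 = \<theta>0 \<bullet> X \<beta>0\<close>, so the second Sasvi half-space is the
  half-space of \<open>R_DS\<close>; the first one is the ball with diameter \<open>[\<theta>0, y]\<close> (Thales).
\<close>

definition is_subgradient :: "('a::real_inner \<Rightarrow> ereal) \<Rightarrow> 'a \<Rightarrow> 'a \<Rightarrow> bool" where
  "is_subgradient g x v \<longleftrightarrow> (\<forall>z. g x + ereal (v \<bullet> (z - x)) \<le> g z)"

lemma inner_matrix_vector_transpose:
  fixes X :: "real^'d^'n"
  shows "t \<bullet> (X *v b) = (transpose X *v t) \<bullet> b"
  by (metis dot_lmul_matrix vector_transpose_matrix transpose_transpose)

lemma econvex_le_combination:
  assumes "econvex g" and "g x = ereal gx" and "g z = ereal gz" and "0 \<le> t" and "t \<le> 1"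
  shows "g ((1 - t) *\<^sub>R x + t *\<^sub>R z) \<le> ereal ((1 - t) * gx + t * gz)"
proof -
  have "(1 - t) *\<^sub>R (x, gx) + t *\<^sub>R (z, gz) \<in> {(x, r::real). g x \<le> ereal r}"
    using assms by (intro convexD[of "{(x, r::real). g x \<le> ereal r}"]) (auto simp: econvex_def)
  then show ?thesis by simp
qed

lemma nonpos_if_le_small_multiples:
  fixes c q :: real
  assumes "\<And>t. 0 < t \<Longrightarrow> t \<le> 1 \<Longrightarrow> c \<le> t * q"
  shows "c \<le> 0"
proof (rule field_le_epsilon)
  fix e :: real
  assume "0 < e"
  define t where "t = min 1 (e / (\<bar>q\<bar> + 1))"
  have t: "0 < t" "t \<le> 1" "t \<le> e / (\<bar>q\<bar> + 1)"
    using \<open>0 < e\<close> by (auto simp: t_def)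
  have "c \<le> t * \<bar>q\<bar>"
    using assms[OF t(1,2)] mult_left_mono[OF abs_ge_self[of q], of t] t(1) by linarith
  also have "\<dots> \<le> e / (\<bar>q\<bar> + 1) * \<bar>q\<bar>"
    using mult_right_mono[OF t(3) abs_ge_zero] by simp
  also have "\<dots> \<le> e"
    using \<open>0 < e\<close> by (simp add: field_simps)
  finally show "c \<le> 0 + e" by simp
qed

lemma least_squares_convex_min_subgradient_ineq:
  fixes L :: "'a::real_vector \<Rightarrow> 'b::real_inner"
  assumes "linear L" and "econvex g" and gx0: "g x0 = ereal G0" and gx: "g x = ereal G"
    and min: "\<And>z. ereal (1/2 * (norm (a - L x0))\<^sup>2) + g x0 \<le> ereal (1/2 * (norm (a - L z))\<^sup>2) + g z"
  shows "(a - L x0) \<bullet> L (x - x0) \<le> G - G0"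
proof -
  define r where "r = a - L x0"
  define u where "u = L (x - x0)"
  have "r \<bullet> u - (G - G0) \<le> 0"
  proof (rule nonpos_if_le_small_multiples[where q = "(norm u)\<^sup>2 / 2"])
    fix t :: real
    assume "0 < t" and "t \<le> 1"
    define z where "z = (1 - t) *\<^sub>R x0 + t *\<^sub>R x"
    have residual_z: "a - L z = r - t *\<^sub>R u"
      using \<open>linear L\<close> by (simp add: z_def r_def u_def linear_diff linear_add linear_scale
          algebra_simps)
    have "ereal (1/2 * (norm r)\<^sup>2) + g x0 \<le> ereal (1/2 * (norm (r - t *\<^sub>R u))\<^sup>2) + g z"
      using min[of z] by (simp add: r_def residual_z)
    also have "\<dots> \<le> ereal (1/2 * (norm (r - t *\<^sub>R u))\<^sup>2) + ereal ((1 - t) * G0 + t * G)"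
      using econvex_le_combination[OF \<open>econvex g\<close> gx0 gx] \<open>0 < t\<close> \<open>t \<le> 1\<close>
      by (intro add_left_mono) (simp add: z_def)
    finally have "1/2 * (norm r)\<^sup>2 + G0 \<le> 1/2 * (norm (r - t *\<^sub>R u))\<^sup>2 + ((1 - t) * G0 + t * G)"
      using gx0 by simp
    moreover have "(norm (r - t *\<^sub>R u))\<^sup>2 = (norm r)\<^sup>2 - 2 * t * (r \<bullet> u) + t\<^sup>2 * (norm u)\<^sup>2"
      unfolding power2_norm_eq_inner by (simp add: inner_diff_left inner_diff_right inner_commute
          power2_eq_square algebra_simps)
    ultimately have "t * (r \<bullet> u - (G - G0)) \<le> t * (t * ((norm u)\<^sup>2 / 2))"
      by (simp add: power2_eq_square algebra_simps)
    then show "r \<bullet> u - (G - G0) \<le> t * ((norm u)\<^sup>2 / 2)"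
      using \<open>0 < t\<close> by simp
  qed
  then show ?thesis by (simp add: r_def u_def)
qed

lemma primal_minimizer_finite:
  assumes "proper_fun g" and "\<forall>\<beta>. primal_obj X y g lam \<beta>0 \<le> primal_obj X y g lam \<beta>"
  obtains G where "g \<beta>0 = ereal G"
proof -
  obtain \<beta> where "g \<beta> < \<infinity>"
    using assms(1) by (auto simp: proper_fun_def)
  then have "primal_obj X y g lam \<beta>0 < \<infinity>"
    using assms(2) by (auto simp: primal_obj_def intro: le_less_trans)
  then have "g \<beta>0 \<noteq> \<infinity>" and "g \<beta>0 \<noteq> -\<infinity>"
    using assms(1) by (auto simp: primal_obj_def proper_fun_def)
  then show ?thesis
    using that by (cases "g \<beta>0") auto
qed

lemma primal_minimizer_subgradient:
  fixes X :: "real^'d^'n"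
  assumes "econvex g" and G0: "g \<beta>0 = ereal G0"
    and min: "\<forall>\<beta>. primal_obj X y g lam \<beta>0 \<le> primal_obj X y g lam \<beta>"
  shows "is_subgradient g \<beta>0 (transpose X *v ((1/lam) *\<^sub>R y - X *v \<beta>0))"
  unfolding is_subgradient_def
proof
  fix z
  show "g \<beta>0 + ereal ((transpose X *v ((1/lam) *\<^sub>R y - X *v \<beta>0)) \<bullet> (z - \<beta>0)) \<le> g z"
  proof (cases "g z")
    case (real G)
    have "((1/lam) *\<^sub>R y - X *v \<beta>0) \<bullet> (X *v (z - \<beta>0)) \<le> G - G0"
      using min by (intro least_squares_convex_min_subgradient_ineq[OF matrix_vector_mul_linear
            \<open>econvex g\<close> G0 real]) (simp add: primal_obj_def)
    then show ?thesis
      using G0 real by (simp add: inner_matrix_vector_transpose)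
  next
    case MInf
    then show ?thesis
      using min[rule_format, of z] G0 by (simp add: primal_obj_def)
  qed simp
qed

lemma fenchel_young: "ereal (v \<bullet> x) - g x \<le> fenchel_conj g v"
  unfolding fenchel_conj_def by (rule SUP_upper) simp

lemma fenchel_conj_subgradient_eq:
  assumes sub: "is_subgradient g x v" and G: "g x = ereal G"
  shows "fenchel_conj g v = ereal (v \<bullet> x - G)"
proof (rule antisym)
  show "fenchel_conj g v \<le> ereal (v \<bullet> x - G)"
    unfolding fenchel_conj_def
  proof (rule SUP_least)
    fix z
    have "ereal G + ereal (v \<bullet> (z - x)) \<le> g z"
      using sub G by (simp add: is_subgradient_def)
    then show "ereal (v \<bullet> z) - g z \<le> ereal (v \<bullet> x - G)"
      by (cases "g z") (auto simp: inner_diff_right)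
  qed
  show "ereal (v \<bullet> x - G) \<le> fenchel_conj g v"
    using fenchel_young[of v x g] G by simp
qed

lemma positively_homogeneous_subgradient_inner_eq:
  assumes hom: "\<forall>k::real. k \<ge> 0 \<longrightarrow> (\<forall>\<beta>. g (k *\<^sub>R \<beta>) = ereal k * g \<beta>)"
    and sub: "is_subgradient g x v" and G: "g x = ereal G"
  shows "v \<bullet> x = G"
proof -
  have "g 0 = 0"
    using hom[rule_format, of 0 0] by (simp add: zero_ereal_def[symmetric])
  then have "G - v \<bullet> x \<le> 0"
    using sub[unfolded is_subgradient_def, rule_format, of 0] G by simp
  moreover have "G + v \<bullet> x \<le> 2 * G"
    using sub[unfolded is_subgradient_def, rule_format, of "2 *\<^sub>R x"] hom[rule_format, of 2 x] G
    by (simp add: algebra_simps)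
  ultimately show ?thesis by simp
qed

lemma dual_obj_plus_dist_le_primal_obj:
  fixes X :: "real^'d^'n"
  shows "dual_obj X y g lam \<theta> + ereal (1/2 * (norm (\<theta> - ((1/lam) *\<^sub>R y - X *v \<beta>)))\<^sup>2)
    \<le> primal_obj X y g lam \<beta>"
proof -
  define r where "r = (1/lam) *\<^sub>R y - X *v \<beta>"
  have conj: "ereal (\<theta> \<bullet> (X *v \<beta>)) - g \<beta> \<le> fenchel_conj g (transpose X *v \<theta>)"
    using fenchel_young by (simp add: inner_matrix_vector_transpose)
  have identity: "- 1/2 * (norm \<theta>)\<^sup>2 + (1/lam) * (y \<bullet> \<theta>) - \<theta> \<bullet> (X *v \<beta>)
      + 1/2 * (norm (\<theta> - r))\<^sup>2 = 1/2 * (norm r)\<^sup>2"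
    by (simp add: r_def power2_norm_eq_inner inner_diff_left inner_diff_right inner_commute
        algebra_simps)
  have "dual_obj X y g lam \<theta> + ereal (1/2 * (norm (\<theta> - r))\<^sup>2)
      \<le> ereal (- 1/2 * (norm \<theta>)\<^sup>2 + (1/lam) * (y \<bullet> \<theta>)) - (ereal (\<theta> \<bullet> (X *v \<beta>)) - g \<beta>)
        + ereal (1/2 * (norm (\<theta> - r))\<^sup>2)"
    unfolding dual_obj_def by (intro add_right_mono ereal_minus_mono[OF order_refl conj])
  also have "\<dots> = primal_obj X y g lam \<beta>"
    unfolding primal_obj_def r_def[symmetric] using identity by (cases "g \<beta>") simp_all
  finally show ?thesis by (simp add: r_def)
qed

lemma dual_obj_residual_eq_primal_obj:
  fixes X :: "real^'d^'n"
  assumes "is_subgradient g \<beta> (transpose X *v ((1/lam) *\<^sub>R y - X *v \<beta>))" and G: "g \<beta> = ereal G"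
  shows "dual_obj X y g lam ((1/lam) *\<^sub>R y - X *v \<beta>) = primal_obj X y g lam \<beta>"
proof -
  define r where "r = (1/lam) *\<^sub>R y - X *v \<beta>"
  have "fenchel_conj g (transpose X *v r) = ereal (r \<bullet> (X *v \<beta>) - G)"
    using fenchel_conj_subgradient_eq[OF assms] by (simp add: r_def inner_matrix_vector_transpose)
  moreover have "- 1/2 * (norm r)\<^sup>2 + (1/lam) * (y \<bullet> r) - (r \<bullet> (X *v \<beta>) - G)
      = 1/2 * (norm r)\<^sup>2 + G"
    by (simp add: r_def power2_norm_eq_inner inner_diff_left inner_diff_right inner_commute
        algebra_simps)
  ultimately show ?thesis
    using G by (simp add: dual_obj_def primal_obj_def r_def)
qed

lemma dual_maximizer_eq_residual:
  fixes X :: "real^'d^'n"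
  assumes sub: "is_subgradient g \<beta> (transpose X *v ((1/lam) *\<^sub>R y - X *v \<beta>))"
    and G: "g \<beta> = ereal G"
    and max: "\<forall>\<theta>. dual_obj X y g lam \<theta> \<le> dual_obj X y g lam \<theta>0"
  shows "\<theta>0 = (1/lam) *\<^sub>R y - X *v \<beta>"
proof -
  define r where "r = (1/lam) *\<^sub>R y - X *v \<beta>"
  define P where "P = 1/2 * (norm r)\<^sup>2 + G"
  have "ereal P = dual_obj X y g lam r"
    using dual_obj_residual_eq_primal_obj[OF sub G] G by (simp add: P_def primal_obj_def r_def)
  also have "\<dots> \<le> dual_obj X y g lam \<theta>0"
    using max by simp
  finally have "ereal P + ereal (1/2 * (norm (\<theta>0 - r))\<^sup>2)
      \<le> dual_obj X y g lam \<theta>0 + ereal (1/2 * (norm (\<theta>0 - r))\<^sup>2)"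
    by (rule add_right_mono)
  also have "\<dots> \<le> ereal P"
    using dual_obj_plus_dist_le_primal_obj[of X y g lam \<theta>0 \<beta>] G
    by (simp add: P_def primal_obj_def r_def)
  finally have "(norm (\<theta>0 - r))\<^sup>2 \<le> 0" by simp
  then show ?thesis by (simp add: r_def)
qed

lemma inner_diff_nonpos_iff_norm_midpoint_le:
  fixes y \<theta> \<theta>0 :: "'a::real_inner"
  shows "(y - \<theta>) \<bullet> (\<theta>0 - \<theta>) \<le> 0 \<longleftrightarrow>
    (norm (\<theta> - (1/2) *\<^sub>R (\<theta>0 + y)))\<^sup>2 \<le> 1/4 * (norm (\<theta>0 - y))\<^sup>2"
proof -
  have "(norm (\<theta> - (1/2) *\<^sub>R (\<theta>0 + y)))\<^sup>2 - 1/4 * (norm (\<theta>0 - y))\<^sup>2 = (y - \<theta>) \<bullet> (\<theta>0 - \<theta>)"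
    by (simp add: power2_norm_eq_inner inner_diff_left inner_diff_right inner_add_left
        inner_add_right inner_commute algebra_simps)
  then show ?thesis by linarith
qed

theorem theorem8:
  fixes X :: "real^'d^'n" and y :: "real^'n" and g :: "real^'d \<Rightarrow> ereal"
    and lam0 :: real and \<beta>0 :: "real^'d" and \<theta>0 :: "real^'n"
  assumes "proper_fun g" and "elsc g" and "econvex g"
    and "\<forall>k::real. k \<ge> 0 \<longrightarrow> (\<forall>\<beta>. g (k *\<^sub>R \<beta>) = ereal k * g \<beta>)"
    and "rel_interior (edom g) \<noteq> {}"
    and "lam0 > 0"
    and "\<forall>\<beta>. primal_obj X y g lam0 \<beta>0 \<le> primal_obj X y g lam0 \<beta>"
    and "\<forall>\<theta>. dual_obj X y g lam0 \<theta> \<le> dual_obj X y g lam0 \<theta>0"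
  shows "R_Sasvi y lam0 \<theta>0 = R_DS X y g \<beta>0 \<theta>0"
proof -
  obtain G0 where G0: "g \<beta>0 = ereal G0"
    using primal_minimizer_finite[OF assms(1,7)] .
  note sub = primal_minimizer_subgradient[OF assms(3) G0 assms(7)]
  have \<theta>0: "\<theta>0 = (1/lam0) *\<^sub>R y - X *v \<beta>0"
    using dual_maximizer_eq_residual[OF sub G0 assms(8)] .
  then have residual: "(1/lam0) *\<^sub>R y - \<theta>0 = X *v \<beta>0"
    by simp
  have "\<theta>0 \<bullet> (X *v \<beta>0) = G0"
    using positively_homogeneous_subgradient_inner_eq[OF assms(4) sub G0] \<theta>0
    by (simp add: inner_matrix_vector_transpose)
  then have "((1/lam0) *\<^sub>R y - \<theta>0) \<bullet> (\<theta> - \<theta>0) \<le> 0 \<longleftrightarrow> 0 \<le> g \<beta>0 - ereal (\<theta> \<bullet> (X *v \<beta>0))"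
    for \<theta>
    unfolding residual G0 by (simp add: inner_diff_right inner_commute)
  then show ?thesis
    unfolding R_Sasvi_def R_DS_def by (auto simp: inner_diff_nonpos_iff_norm_midpoint_le)
qed

end
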